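(* Let $n$ be even and consider the four-objective problem AOAZ (defined in the context). The expected running time of SEMO applied to AOAZ is bounded by $O(\frac{5}{2}n^2\log n)$.
   Context: AOAZ: $\{0,1\}^n\to\mathbb{N}^4$, $\mathrm{AOAZ}(\mathbf{x})=(f_{11}(\mathbf{x}),f_{12}(\mathbf{x}),f_{21}(\mathbf{x}),f_{22}(\mathbf{x}))$ for $\mathbf{x}=(x_1,\dots,x_n)$, $n$ even, where $f_{11}(\mathbf{x})=\sum_{i=n/2+1}^{n}x_i$, $f_{12}(\mathbf{x})=\sum_{i=1}^{n/2}x_i+\sum_{i=n/2+1}^{n}(1-x_i)$, $f_{21}(\mathbf{x})=\sum_{i=1}^{n/2}(1-x_i)+\sum_{i=n/2+1}^{n}x_i$, $f_{22}(\mathbf{x})=\sum_{i=1}^{n/2}x_i$; all four objectives are maximized, with the usual Pareto dominance ($\mathbf{z}\succ\mathbf{x}$ if $\mathbf{z}$ is at least as good in all four objectives and strictly better in one). SEMO: choose $\mathbf{x}$ uniformly from $\{0,1\}^n$, $P=\{\mathbf{x}\}$. Each iteration: pick $\mathbf{x}\in P$ uniformly at random, flip one uniformly random bit to get $\mathbf{x}'$; if there is no $\mathbf{z}\in P$ with $\mathbf{z}\succ\mathbf{x}'$ or $\mathrm{AOAZ}(\mathbf{z})=\mathrm{AOAZ}(\mathbf{x}')$, set $P\leftarrow(P\setminus\{\mathbf{z}\in P:\mathbf{x}'\succ\mathbf{z}\})\cup\{\mathbf{x}'\}$. The running time is the number of fitness evaluations (mutations) until the population covers the whole Pareto front of AOAZ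 for the first time. *)

theory Defs
  imports "HOL-Probability.Probability"
begin

text \<open>Bit strings x = (x_1,...,x_n) are bool lists of length n; x_i is x ! (i-1).\<close>

definition f11 :: "nat \<Rightarrow> bool list \<Rightarrow> nat" where
  "f11 n x = (\<Sum>i\<in>{n div 2..<n}. of_bool (x ! i))"

definition f12 :: "nat \<Rightarrow> bool list \<Rightarrow> nat" where
  "f12 n x = (\<Sum>i\<in>{..<n div 2}. of_bool (x ! i)) + (\<Sum>i\<in>{n div 2..<n}. of_bool (\<not> x ! i))"

definition f21 :: "nat \<Rightarrow> bool list \<Rightarrow> nat" where
  "f21 n x = (\<Sum>i\<in>{..<n div 2}. of_bool (\<not> x ! i)) + (\<Sum>i\<in>{n div 2..<n}. of_bool (x ! i))"

definition f22 :: "nat \<Rightarrow> bool list \<Rightarrow> nat" where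
  "f22 n x = (\<Sum>i\<in>{..<n div 2}. of_bool (x ! i))"

definition AOAZ :: "nat \<Rightarrow> bool list \<Rightarrow> nat \<times> nat \<times> nat \<times> nat" where
  "AOAZ n x = (f11 n x, f12 n x, f21 n x, f22 n x)"

definition weakly_geq :: "nat \<times> nat \<times> nat \<times> nat \<Rightarrow> nat \<times> nat \<times> nat \<times> nat \<Rightarrow> bool" where
  "weakly_geq u v = (case u of (a1,a2,a3,a4) \<Rightarrow> case v of (b1,b2,b3,b4) \<Rightarrow>
      b1 \<le> a1 \<and> b2 \<le> a2 \<and> b3 \<le> a3 \<and> b4 \<le> a4)"

definition dominates :: "nat \<Rightarrow> bool list \<Rightarrow> bool list \<Rightarrow> bool" where
  "dominates n z x = (weakly_geq (AOAZ n z) (AOAZ n x) \<and> AOAZ n z \<noteq> AOAZ n x)"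

definition bitstrings :: "nat \<Rightarrow> bool list set" where
  "bitstrings n = {x. length x = n}"

definition pareto_front :: "nat \<Rightarrow> (nat \<times> nat \<times> nat \<times> nat) set" where
  "pareto_front n = {AOAZ n x | x. x \<in> bitstrings n \<and> \<not> (\<exists>z\<in>bitstrings n. dominates n z x)}"

definition covers_front :: "nat \<Rightarrow> bool list set \<Rightarrow> bool" where
  "covers_front n P = (pareto_front n \<subseteq> AOAZ n ` P)"

definition flip :: "bool list \<Rightarrow> nat \<Rightarrow> bool list" where
  "flip x i = x[i := \<not> x ! i]"

definition semo_update :: "nat \<Rightarrow> bool list set \<Rightarrow> bool list \<Rightarrow> bool list set" where
  "semo_update n P x' =
     (if \<exists>z\<in>P. dominates n z x' \<or> AOAZ n z = AOAZ n x' then P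
      else {z\<in>P. \<not> dominates n x' z} \<union> {x'})"

text \<open>The process is stopped
  (made absorbing) once the population covers the Pareto front, so that the probability
  of not yet covering at time t equals the probability that the running time exceeds t.\<close>
definition semo_step :: "nat \<Rightarrow> bool list set \<Rightarrow> bool list set pmf" where
  "semo_step n P =
     (if covers_front n P then return_pmf P
      else do {
        x \<leftarrow> pmf_of_set P;
        i \<leftarrow> pmf_of_set {..<n};
        return_pmf (semo_update n P (flip x i))
      })"

primrec semo_pop :: "nat \<Rightarrow> nat \<Rightarrow> bool list set pmf" where
  "semo_pop n 0 = map_pmf (\<lambda>x. {x}) (pmf_of_set (bitstrings n))"
| "semo_pop n (Suc t) = bind_pmf (semo_pop n t) (semo_step n)"

text \<open>Expected running time T (number of mutations until the front is covered for the first
  time), via the tail-sum formula E[T] = sum_{t>=0} Pr[T > t]; value in ennreal (may be \<infinity>).\<close>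
definition semo_expected_runtime :: "nat \<Rightarrow> ennreal" where
  "semo_expected_runtime n =
     (\<Sum>t. ennreal (measure_pmf.prob (semo_pop n t) {P. \<not> covers_front n P}))"

end

theory Submission
  imports Defs
begin

(* Write m = n div 2, a x = f22 n x (ones in the first half) and b x = f11 n x (ones in the
  second half). All four objectives are functions of (a, b), and z dominates x iff a and b both
  grow by the same positive amount. So incomparable points lie on distinct diagonals a - b,
  a population has at most n + 1 members, the Pareto front is the set of points with a = m or
  b = m, and a front point once found is never lost.

  The potential has 4 m levels in three phases: raise the largest a to m (the best point has
  m - a improving one-bit flips), move along the edge a = m towards the corner (m, m)
  (m - b improving flips), then extend the covered segments of both edges of the front away
  from the corner (the end point (m, b) of one segment has b improving flips, the end point
  (a, m) of the other has a). A given parent is picked with probability at least 1 / (n + 1)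
  and a given bit with probability 1 / n, so the fitness-level method bounds the expected
  runtime by n (n + 1) (2 H_m + H_n). *)

section \<open>Uniform choices and the fitness-level method\<close>

lemma prob_uniform_pair_choice:
  assumes "finite P" "P \<noteq> {}" "0 < n"
  shows "measure_pmf.prob (pmf_of_set P \<bind> (\<lambda>x. pmf_of_set {..<n} \<bind> (\<lambda>i. return_pmf (f x i)))) U
    = card {(x, i) \<in> P \<times> {..<n}. f x i \<in> U} / (card P * n)"
proof -
  let ?S = "{(x, i) \<in> P \<times> {..<n}. f x i \<in> U}"
  have "(\<Sum>x\<in>P. \<Sum>i<n. indicator U (f x i) :: ennreal) = (\<Sum>(x, i)\<in>P \<times> {..<n}. indicator U (f x i))"
    by (simp add: sum.cartesian_product)
  also have "\<dots> = card ?S"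
    using assms(1) by (simp add: sum.If_cases indicator_def case_prod_beta Int_def flip: ennreal_of_nat_eq_real_of_nat)
      (auto intro!: arg_cong[where f = card])
  finally have sum_eq: "(\<Sum>x\<in>P. \<Sum>i<n. indicator U (f x i) :: ennreal) = card ?S" .
  have "emeasure (measure_pmf (pmf_of_set P \<bind> (\<lambda>x. pmf_of_set {..<n} \<bind> (\<lambda>i. return_pmf (f x i))))) U
     = (\<Sum>x\<in>P. (\<Sum>i<n. indicator U (f x i)) / ennreal n) / ennreal (card P)"
    using assms by (simp add: nn_integral_pmf_of_set lessThan_empty_iff ennreal_of_nat_eq_real_of_nat)
  also have "\<dots> = ennreal (card ?S / (card P * n))"
  proof -
    have "(\<Sum>x\<in>P. (\<Sum>i<n. indicator U (f x i)) / ennreal n) = ennreal (card ?S) / ennreal n"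
      unfolding divide_ennreal_def by (simp add: sum_distrib_right[symmetric] sum_eq ennreal_of_nat_eq_real_of_nat)
    then show ?thesis
      using assms by (simp add: divide_ennreal ennreal_of_nat_eq_real_of_nat card_gt_0_iff)
  qed
  finally show ?thesis by (simp add: measure_pmf.emeasure_eq_measure)
qed

lemma tail_sum_le_potential:
  fixes X :: "nat \<Rightarrow> 's pmf" and K :: "'s \<Rightarrow> 's pmf" and g :: "'s \<Rightarrow> ennreal"
  assumes X_Suc: "\<And>t. X (Suc t) = X t \<bind> K"
    and inv_init: "\<And>s. s \<in> set_pmf (X 0) \<Longrightarrow> I s"
    and inv_step: "\<And>s s'. I s \<Longrightarrow> s' \<in> set_pmf (K s) \<Longrightarrow> I s'"
    and g_le: "\<And>s. g s \<le> C"
    and drift: "\<And>s. I s \<Longrightarrow> (\<integral>\<^sup>+s'. g s' \<partial>K s) + indicator {s. \<not> F s} s \<le> g s"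
  shows "(\<Sum>t. ennreal (measure_pmf.prob (X t) {s. \<not> F s})) \<le> C"
proof -
  let ?A = "{s. \<not> F s}"
  define h where "h t = (\<integral>\<^sup>+s. g s \<partial>X t)" for t
  have inv: "I s" if "s \<in> set_pmf (X t)" for t s
    using that by (induction t arbitrary: s) (auto simp: X_Suc intro: inv_init inv_step)
  have step: "h (Suc t) + ennreal (measure_pmf.prob (X t) ?A) \<le> h t" for t
  proof -
    have "h (Suc t) + ennreal (measure_pmf.prob (X t) ?A)
        = (\<integral>\<^sup>+s. (\<integral>\<^sup>+s'. g s' \<partial>K s) + indicator ?A s \<partial>X t)"
      by (simp add: h_def X_Suc nn_integral_add measure_pmf.emeasure_eq_measure[symmetric])
    also have "\<dots> \<le> h t"
      unfolding h_def by (intro nn_integral_mono_AE AE_pmfI drift inv)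
    finally show ?thesis .
  qed
  have partial: "(\<Sum>t<N. ennreal (measure_pmf.prob (X t) ?A)) + h N \<le> h 0" for N
  proof (induction N)
    case (Suc N)
    have "(\<Sum>t<Suc N. ennreal (measure_pmf.prob (X t) ?A)) + h (Suc N)
        = (\<Sum>t<N. ennreal (measure_pmf.prob (X t) ?A)) + (h (Suc N) + ennreal (measure_pmf.prob (X N) ?A))"
      by (simp add: algebra_simps)
    also have "\<dots> \<le> (\<Sum>t<N. ennreal (measure_pmf.prob (X t) ?A)) + h N"
      using step by (rule add_left_mono)
    finally show ?case using Suc.IH by (rule order_trans)
  qed simp
  have h0: "h 0 \<le> C"
  proof -
    have "h 0 \<le> (\<integral>\<^sup>+s. C \<partial>X 0)"
      unfolding h_def by (intro nn_integral_mono g_le)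
    then show ?thesis by (simp add: measure_pmf.emeasure_space_1)
  qed
  have "(\<Sum>t<N. ennreal (measure_pmf.prob (X t) ?A)) \<le> C" for N
  proof -
    have "(\<Sum>t<N. ennreal (measure_pmf.prob (X t) ?A)) \<le> (\<Sum>t<N. ennreal (measure_pmf.prob (X t) ?A)) + h N"
      by simp
    also have "\<dots> \<le> C" using partial h0 by (rule order_trans)
    finally show ?thesis .
  qed
  then show ?thesis
    unfolding suminf_eq_SUP by (intro SUP_least)
qed

lemma fitness_level_method:
  fixes X :: "nat \<Rightarrow> 's pmf" and K :: "'s \<Rightarrow> 's pmf" and level :: "'s \<Rightarrow> nat" and p :: "nat \<Rightarrow> real"
  assumes X_Suc: "\<And>t. X (Suc t) = X t \<bind> K"
    and inv_init: "\<And>s. s \<in> set_pmf (X 0) \<Longrightarrow> I s"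
    and inv_step: "\<And>s s'. I s \<Longrightarrow> s' \<in> set_pmf (K s) \<Longrightarrow> I s'"
    and level_mono: "\<And>s s'. I s \<Longrightarrow> s' \<in> set_pmf (K s) \<Longrightarrow> level s \<le> level s'"
    and level_less: "\<And>s. I s \<Longrightarrow> \<not> F s \<Longrightarrow> level s < L"
    and p_pos: "\<And>k. k < L \<Longrightarrow> 0 < p k"
    and progress: "\<And>s. I s \<Longrightarrow> \<not> F s \<Longrightarrow> p (level s) \<le> measure_pmf.prob (K s) {s'. level s < level s'}"
  shows "(\<Sum>t. ennreal (measure_pmf.prob (X t) {s. \<not> F s})) \<le> ennreal (\<Sum>k<L. 1 / p k)"
proof -
  define G where "G k = (\<Sum>j\<in>{k..<L}. 1 / p j)" for k
  have G_antimono: "G k' \<le> G k" if "k \<le> k'" for k k'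
    unfolding G_def using that p_pos by (intro sum_mono2) (auto simp: less_imp_le)
  have G_step: "G k = 1 / p k + G (Suc k)" if "k < L" for k
    unfolding G_def using that by (simp add: sum.atLeast_Suc_lessThan)
  have G_nonneg: "0 \<le> G k" for k
    unfolding G_def using p_pos by (intro sum_nonneg) (simp add: less_imp_le)
  show ?thesis
  proof (rule tail_sum_le_potential[where g = "\<lambda>s. ennreal (G (level s))" and I = I])
    show "X (Suc t) = X t \<bind> K" for t by (rule X_Suc)
    show "I s" if "s \<in> set_pmf (X 0)" for s using that by (rule inv_init)
    show "I s'" if "I s" "s' \<in> set_pmf (K s)" for s s' using that by (rule inv_step)
    show "ennreal (G (level s)) \<le> ennreal (\<Sum>k<L. 1 / p k)" for s
      using G_antimono[of 0 "level s"] by (simp add: G_def atLeast0LessThan ennreal_leI)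
  next
    fix s assume "I s"
    show "(\<integral>\<^sup>+s'. ennreal (G (level s')) \<partial>K s) + indicator {s. \<not> F s} s \<le> ennreal (G (level s))"
    proof (cases "F s")
      case True
      have "(\<integral>\<^sup>+s'. ennreal (G (level s')) \<partial>K s) \<le> (\<integral>\<^sup>+s'. ennreal (G (level s)) \<partial>K s)"
        by (intro nn_integral_mono_AE AE_pmfI ennreal_leI G_antimono level_mono \<open>I s\<close>)
      then show ?thesis
        using True by (simp add: measure_pmf.emeasure_space_1)
    next
      case False
      define k where "k = level s"
      define U where "U = {s'. k < level s'}"
      have "k < L" using level_less[OF \<open>I s\<close> False] by (simp add: k_def)
      then have pk: "0 < p k" by (rule p_pos)
      have bound: "ennreal (G (level s')) + ennreal (1 / p k) * indicator U s' \<le> ennreal (G k)"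
        if "s' \<in> set_pmf (K s)" for s'
      proof (cases "s' \<in> U")
        case True
        then have "G (level s') \<le> G (Suc k)" by (intro G_antimono) (simp add: U_def)
        then have "G (level s') + 1 / p k \<le> G k"
          using G_step[OF \<open>k < L\<close>] by simp
        then show ?thesis
          using True pk G_nonneg by (simp add: ennreal_plus[symmetric] del: ennreal_plus)
      next
        case False
        then have "level s' = k"
          using level_mono[OF \<open>I s\<close> that] by (simp add: U_def k_def)
        then show ?thesis using False by simp
      qed
      have "ennreal (1 / p k) * ennreal (p k) = 1"
        using pk by (simp add: ennreal_mult[symmetric] del: ennreal_mult)
      then have "1 = ennreal (1 / p k) * ennreal (p k)" ..
      also have "\<dots> \<le> ennreal (1 / p k) * emeasure (measure_pmf (K s)) U"
        using progress[OF \<open>I s\<close> False] unfolding k_def[symmetric] U_def[symmetric]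
        by (intro mult_left_mono) (simp_all add: measure_pmf.emeasure_eq_measure)
      finally have one: "1 \<le> ennreal (1 / p k) * emeasure (measure_pmf (K s)) U" .
      have "(\<integral>\<^sup>+s'. ennreal (G (level s')) \<partial>K s) + 1
          \<le> (\<integral>\<^sup>+s'. ennreal (G (level s')) + ennreal (1 / p k) * indicator U s' \<partial>K s)"
        using one by (simp add: nn_integral_add nn_integral_cmult_indicator)
      also have "\<dots> \<le> (\<integral>\<^sup>+s'. ennreal (G k) \<partial>K s)"
        by (intro nn_integral_mono_AE AE_pmfI bound)
      finally show ?thesis
        using False by (simp add: k_def measure_pmf.emeasure_space_1)
    qed
  qed
qed

section \<open>Terminal segments of an interval\<close>

(* If Q m fails, the least l is Suc m, for which the condition holds vacuously. *)
definition suffix_start :: "nat \<Rightarrow> (nat \<Rightarrow> bool) \<Rightarrow> nat" where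
  "suffix_start m Q = (LEAST l. \<forall>j. l \<le> j \<and> j \<le> m \<longrightarrow> Q j)"

lemma suffix_start_least: "(\<And>j. l \<le> j \<Longrightarrow> j \<le> m \<Longrightarrow> Q j) \<Longrightarrow> suffix_start m Q \<le> l"
  unfolding suffix_start_def by (rule Least_le) blast

lemma suffix_start_holds:
  assumes "suffix_start m Q \<le> j" "j \<le> m"
  shows "Q j"
proof -
  have "\<forall>j. Suc m \<le> j \<and> j \<le> m \<longrightarrow> Q j" by auto
  then have "\<forall>j. suffix_start m Q \<le> j \<and> j \<le> m \<longrightarrow> Q j"
    unfolding suffix_start_def by (rule LeastI)
  then show ?thesis using assms by blast
qed

lemma suffix_start_le: "Q m \<Longrightarrow> suffix_start m Q \<le> m"
  by (rule suffix_start_least) simp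

lemma not_suffix_start_pred:
  assumes "0 < suffix_start m Q"
  shows "\<not> Q (suffix_start m Q - 1)"
proof
  assume pred: "Q (suffix_start m Q - 1)"
  have "suffix_start m Q \<le> suffix_start m Q - 1"
  proof (rule suffix_start_least)
    fix j assume "suffix_start m Q - 1 \<le> j" "j \<le> m"
    then show "Q j" using pred suffix_start_holds[of m Q j] by (cases "j = suffix_start m Q - 1") auto
  qed
  then show False using assms by simp
qed

lemma suffix_start_mono:
  "(\<And>j. j \<le> m \<Longrightarrow> Q j \<Longrightarrow> Q' j) \<Longrightarrow> suffix_start m Q' \<le> suffix_start m Q"
  by (intro suffix_start_least) (simp add: suffix_start_holds)

lemma suffix_start_less:
  assumes "0 < suffix_start m Q" "\<And>j. j \<le> m \<Longrightarrow> Q j \<Longrightarrow> Q' j" "Q' (suffix_start m Q - 1)"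
  shows "suffix_start m Q' < suffix_start m Q"
proof -
  have "suffix_start m Q' \<le> suffix_start m Q - 1"
  proof (rule suffix_start_least)
    fix j assume "suffix_start m Q - 1 \<le> j" "j \<le> m"
    then show "Q' j"
      using assms suffix_start_holds[of m Q j] by (cases "j = suffix_start m Q - 1") auto
  qed
  then show ?thesis using assms(1) by simp
qed

section \<open>The objectives as functions of two counts\<close>

lemma card_filter_not:
  assumes "finite A"
  shows "card {i \<in> A. \<not> Q i} = card A - card {i \<in> A. Q i}"
proof -
  have "{i \<in> A. \<not> Q i} = A - {i \<in> A. Q i}" by blast
  then show ?thesis using assms by (simp add: card_Diff_subset)
qed

lemma f22_eq_card: "f22 n x = card {i \<in> {..<n div 2}. x ! i}"
  unfolding f22_def by (simp add: Int_def)

lemma f11_eq_card: "f11 n x = card {i \<in> {n div 2..<n}. x ! i}"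
  unfolding f11_def by (simp add: Int_def)

lemma card_upper_half: "even n \<Longrightarrow> card {n div 2..<n} = n div 2"
  by (auto elim!: evenE)

lemma f22_le: "f22 n x \<le> n div 2"
proof -
  have "card {i \<in> {..<n div 2}. x ! i} \<le> card {..<n div 2}" by (intro card_mono) auto
  then show ?thesis by (simp add: f22_eq_card)
qed

lemma f11_le:
  assumes "even n"
  shows "f11 n x \<le> n div 2"
proof -
  have "card {i \<in> {n div 2..<n}. x ! i} \<le> card {n div 2..<n}" by (intro card_mono) auto
  then show ?thesis using card_upper_half[OF assms] by (simp only: f11_eq_card)
qed

lemma card_zeros_fst: "card {i \<in> {..<n div 2}. \<not> x ! i} = n div 2 - f22 n x"
  unfolding f22_eq_card by (subst card_filter_not) auto

lemma card_zeros_snd: "even n \<Longrightarrow> card {i \<in> {n div 2..<n}. \<not> x ! i} = n div 2 - f11 n x"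
  unfolding f11_eq_card by (subst card_filter_not) (auto simp: card_upper_half)

lemma AOAZ_even:
  assumes "even n"
  shows "AOAZ n x = (f11 n x, f22 n x + (n div 2 - f11 n x), (n div 2 - f22 n x) + f11 n x, f22 n x)"
proof -
  have "f12 n x = f22 n x + (n div 2 - f11 n x)"
    using card_zeros_snd[OF assms] by (simp add: f12_def f22_def Int_def)
  moreover have "f21 n x = (n div 2 - f22 n x) + f11 n x"
    using card_zeros_fst by (simp add: f21_def f11_def Int_def)
  ultimately show ?thesis by (simp add: AOAZ_def)
qed

lemma AOAZ_eq_iff:
  "even n \<Longrightarrow> AOAZ n x = AOAZ n y \<longleftrightarrow> f22 n x = f22 n y \<and> f11 n x = f11 n y"
  using f11_le[of n x] f11_le[of n y] f22_le[of n x] f22_le[of n y] by (auto simp: AOAZ_even)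

lemma dominates_iff:
  "even n \<Longrightarrow> dominates n z x \<longleftrightarrow> f22 n x < f22 n z \<and> f22 n z + f11 n x = f22 n x + f11 n z"
  using f11_le[of n x] f11_le[of n z] f22_le[of n x] f22_le[of n z]
  by (auto simp: dominates_def weakly_geq_def AOAZ_even)

lemma dominates_imp_less:
  "even n \<Longrightarrow> dominates n z x \<Longrightarrow> f22 n x < f22 n z \<and> f11 n x < f11 n z"
  by (simp add: dominates_iff)

lemma length_flip [simp]: "length (flip x i) = length x"
  by (simp add: flip_def)

lemma nth_flip: "i < length x \<Longrightarrow> flip x i ! j = (if j = i then \<not> x ! i else x ! j)"
  by (simp add: flip_def nth_list_update)

lemma card_filter_flip:
  assumes "finite S" "i < length x"
  shows "card {j \<in> S. flip x i ! j} =
    (if i \<notin> S then card {j \<in> S. x ! j}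
     else if x ! i then card {j \<in> S. x ! j} - 1
     else card {j \<in> S. x ! j} + 1)"
proof -
  have "{j \<in> S. flip x i ! j} =
    (if i \<notin> S then {j \<in> S. x ! j}
     else if x ! i then {j \<in> S. x ! j} - {i}
     else insert i {j \<in> S. x ! j})"
    using assms(2) by (auto simp: nth_flip)
  then show ?thesis using assms(1) by simp
qed

lemma f22_flip:
  "i < length x \<Longrightarrow> f22 n (flip x i) =
    (if n div 2 \<le> i then f22 n x else if x ! i then f22 n x - 1 else f22 n x + 1)"
  unfolding f22_eq_card by (subst card_filter_flip) auto

lemma f11_flip:
  "i < length x \<Longrightarrow> f11 n (flip x i) =
    (if i < n div 2 \<or> n \<le> i then f11 n x else if x ! i then f11 n x - 1 else f11 n x + 1)"
  unfolding f11_eq_card by (subst card_filter_flip) auto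

lemma flip_in_bitstrings: "x \<in> bitstrings n \<Longrightarrow> flip x i \<in> bitstrings n"
  by (simp add: bitstrings_def)

lemma finite_bitstrings: "finite (bitstrings n)"
proof -
  have "finite {xs. set xs \<subseteq> (UNIV :: bool set) \<and> length xs = n}"
    by (rule finite_lists_length_eq) simp
  then show ?thesis by (simp add: bitstrings_def)
qed

lemma bitstrings_nonempty: "bitstrings n \<noteq> {}"
proof -
  have "replicate n False \<in> bitstrings n" by (simp add: bitstrings_def)
  then show ?thesis by blast
qed

section \<open>The Pareto front\<close>

lemma exists_dominating_off_front:
  assumes "even n" "x \<in> bitstrings n" "f22 n x < n div 2" "f11 n x < n div 2"
  shows "\<exists>z\<in>bitstrings n. dominates n z x"
proof -
  have len: "length x = n" using assms(2) by (simp add: bitstrings_def)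
  have "{i \<in> {..<n div 2}. \<not> x ! i} \<noteq> {}"
    using assms(3) card_zeros_fst[of n x] by (metis card.empty diff_is_0_eq leD)
  then obtain i where i: "i < n div 2" "\<not> x ! i" by blast
  have "{j \<in> {n div 2..<n}. \<not> x ! j} \<noteq> {}"
    using assms(4) card_zeros_snd[OF assms(1), of x] by (metis card.empty diff_is_0_eq leD)
  then obtain j where j: "n div 2 \<le> j" "j < n" "\<not> x ! j" by auto
  define z where "z = flip (flip x i) j"
  have "f22 n z = f22 n x + 1" "f11 n z = f11 n x + 1"
    using i j len by (simp_all add: z_def f22_flip f11_flip nth_flip)
  then have "dominates n z x" using assms(1) by (simp add: dominates_iff)
  moreover have "z \<in> bitstrings n" using assms(2) by (simp add: z_def flip_in_bitstrings)
  ultimately show ?thesis by blast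
qed

definition occupies :: "nat \<Rightarrow> bool list set \<Rightarrow> nat \<Rightarrow> nat \<Rightarrow> bool" where
  "occupies n P a b \<longleftrightarrow> (\<exists>x\<in>P. f22 n x = a \<and> f11 n x = b)"

lemma covers_front_if_edges_occupied:
  assumes "even n" "\<And>b. b \<le> n div 2 \<Longrightarrow> occupies n P (n div 2) b"
    "\<And>a. a \<le> n div 2 \<Longrightarrow> occupies n P a (n div 2)"
  shows "covers_front n P"
  unfolding covers_front_def pareto_front_def
proof (intro subsetI, elim CollectE exE conjE)
  fix v x assume v: "v = AOAZ n x" and x: "x \<in> bitstrings n" "\<not> (\<exists>z\<in>bitstrings n. dominates n z x)"
  have "f22 n x = n div 2 \<or> f11 n x = n div 2"
    using exists_dominating_off_front[OF assms(1) x(1)] x(2) f22_le[of n x] f11_le[OF assms(1), of x]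
    by linarith
  then have "occupies n P (f22 n x) (f11 n x)"
    using assms f22_le[of n x] f11_le[OF assms(1), of x] by auto
  then show "v \<in> AOAZ n ` P"
    using assms(1) v by (auto simp: occupies_def AOAZ_eq_iff intro: rev_image_eqI)
qed

definition valid_population :: "nat \<Rightarrow> bool list set \<Rightarrow> bool" where
  "valid_population n P \<longleftrightarrow> finite P \<and> P \<noteq> {} \<and> P \<subseteq> bitstrings n \<and> inj_on (AOAZ n) P \<and>
     (\<forall>x\<in>P. \<forall>y\<in>P. \<not> dominates n x y)"

lemma valid_population_singleton: "x \<in> bitstrings n \<Longrightarrow> valid_population n {x}"
  by (simp add: valid_population_def dominates_def)

lemma valid_population_update:
  assumes "valid_population n P" "x' \<in> bitstrings n"
  shows "valid_population n (semo_update n P x')"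
proof (cases "\<exists>z\<in>P. dominates n z x' \<or> AOAZ n z = AOAZ n x'")
  case True
  then show ?thesis using assms(1) by (simp add: semo_update_def)
next
  case False
  then have "semo_update n P x' = insert x' {z \<in> P. \<not> dominates n x' z}"
    by (auto simp: semo_update_def)
  moreover have "inj_on (AOAZ n) (insert x' {z \<in> P. \<not> dominates n x' z})"
    using assms(1) False by (auto simp: valid_population_def inj_on_def)
  ultimately show ?thesis
    using assms False by (simp add: valid_population_def dominates_def) blast
qed

lemma valid_population_update_flip:
  assumes "valid_population n P" "x \<in> P"
  shows "valid_population n (semo_update n P (flip x i))"
proof (rule valid_population_update[OF assms(1)])
  show "flip x i \<in> bitstrings n"
    using assms by (auto simp: valid_population_def flip_in_bitstrings)
qed

lemma card_valid_population:
  assumes "valid_population n P" "even n"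
  shows "card P \<le> n + 1"
proof -
  let ?diag = "\<lambda>z. f22 n z + (n div 2 - f11 n z)"
  have "inj_on ?diag P"
  proof (rule inj_onI)
    fix y z assume yz: "y \<in> P" "z \<in> P" "?diag y = ?diag z"
    then have "f22 n y + f11 n z = f22 n z + f11 n y"
      using f11_le[OF assms(2), of y] f11_le[OF assms(2), of z] by linarith
    then have "AOAZ n y = AOAZ n z \<or> dominates n y z \<or> dominates n z y"
      using assms(2) by (auto simp: AOAZ_eq_iff dominates_iff)
    then show "y = z"
      using assms(1) yz by (auto simp: valid_population_def inj_on_def)
  qed
  moreover have "?diag ` P \<subseteq> {..n}"
  proof -
    have "?diag z \<le> 2 * (n div 2)" for z using f22_le[of n z] by linarith
    then show ?thesis using assms(2) by auto
  qed
  ultimately have "card P \<le> card {..n}"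
    by (intro card_inj_on_le) auto
  then show ?thesis by simp
qed

lemma semo_update_accepts:
  "(\<And>z. z \<in> P \<Longrightarrow> \<not> dominates n z x' \<and> AOAZ n z \<noteq> AOAZ n x') \<Longrightarrow> x' \<in> semo_update n P x'"
  by (auto simp: semo_update_def)

lemma semo_update_retains:
  "z \<in> P \<Longrightarrow> z \<in> semo_update n P x' \<or> (x' \<in> semo_update n P x' \<and> dominates n x' z)"
  by (auto simp: semo_update_def)

lemma occupies_update_front:
  assumes "even n" "occupies n P a b" "a = n div 2 \<or> b = n div 2"
  shows "occupies n (semo_update n P x') a b"
proof -
  obtain z where z: "z \<in> P" "f22 n z = a" "f11 n z = b"
    using assms(2) by (auto simp: occupies_def)
  have "\<not> dominates n x' z"
    using dominates_imp_less[OF assms(1)] f22_le[of n x'] f11_le[OF assms(1), of x'] z assms(3)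
    by fastforce
  then show ?thesis
    using semo_update_retains[OF z(1)] z by (auto simp: occupies_def)
qed

lemma occupies_update_new_front:
  assumes "even n" "f22 n x' = n div 2 \<or> f11 n x' = n div 2" "\<not> occupies n P (f22 n x') (f11 n x')"
  shows "occupies n (semo_update n P x') (f22 n x') (f11 n x')"
proof -
  have "x' \<in> semo_update n P x'"
  proof (rule semo_update_accepts)
    fix z assume "z \<in> P"
    then show "\<not> dominates n z x' \<and> AOAZ n z \<noteq> AOAZ n x'"
      using assms dominates_imp_less[OF assms(1), of z x'] f22_le[of n z] f11_le[OF assms(1), of z]
      by (auto simp: occupies_def AOAZ_eq_iff)
  qed
  then show ?thesis by (auto simp: occupies_def)
qed

section \<open>The potential\<close>

definition max_f22 :: "nat \<Rightarrow> bool list set \<Rightarrow> nat" where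
  "max_f22 n P = Max (f22 n ` P)"

definition max_f11_on_edge :: "nat \<Rightarrow> bool list set \<Rightarrow> nat" where
  "max_f11_on_edge n P = Max (f11 n ` {x \<in> P. f22 n x = n div 2})"

lemma f22_le_max_f22: "finite P \<Longrightarrow> x \<in> P \<Longrightarrow> f22 n x \<le> max_f22 n P"
  by (simp add: max_f22_def)

lemma max_f22_attained: "finite P \<Longrightarrow> P \<noteq> {} \<Longrightarrow> \<exists>x\<in>P. f22 n x = max_f22 n P"
  unfolding max_f22_def by (metis (mono_tags, lifting) Max_in finite_imageI image_iff image_is_empty)

lemma max_f22_le: "finite P \<Longrightarrow> P \<noteq> {} \<Longrightarrow> max_f22 n P \<le> n div 2"
  using max_f22_attained f22_le by metis

lemma max_f22_eq_if_occupies: "finite P \<Longrightarrow> occupies n P (n div 2) b \<Longrightarrow> max_f22 n P = n div 2"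
  by (metis (no_types, lifting) empty_iff f22_le_max_f22 le_antisym max_f22_le occupies_def)

lemma f11_le_max_f11_on_edge:
  "finite P \<Longrightarrow> x \<in> P \<Longrightarrow> f22 n x = n div 2 \<Longrightarrow> f11 n x \<le> max_f11_on_edge n P"
  by (simp add: max_f11_on_edge_def)

lemma occupies_max_f11_on_edge:
  assumes "finite P" "occupies n P (n div 2) b"
  shows "occupies n P (n div 2) (max_f11_on_edge n P)"
proof -
  have "{x \<in> P. f22 n x = n div 2} \<noteq> {}" using assms(2) by (auto simp: occupies_def)
  then have "max_f11_on_edge n P \<in> f11 n ` {x \<in> P. f22 n x = n div 2}"
    unfolding max_f11_on_edge_def using assms(1) by (intro Max_in) auto
  then show ?thesis by (auto simp: occupies_def)
qed

lemma max_f22_update_mono: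
  assumes "even n" "valid_population n P" "x' \<in> bitstrings n"
  shows "max_f22 n P \<le> max_f22 n (semo_update n P x')"
proof -
  have fin: "finite (semo_update n P x')"
    using valid_population_update[OF assms(2,3)] by (simp add: valid_population_def)
  obtain z where z: "z \<in> P" "f22 n z = max_f22 n P"
    using assms(2) max_f22_attained by (metis valid_population_def)
  show ?thesis
    using semo_update_retains[OF z(1)] f22_le_max_f22[OF fin] z(2) dominates_imp_less[OF assms(1)]
    by (metis dual_order.strict_implies_order order.trans)
qed

abbreviation f22_edge_start :: "nat \<Rightarrow> bool list set \<Rightarrow> nat" where
  "f22_edge_start n P \<equiv> suffix_start (n div 2) (occupies n P (n div 2))"

abbreviation f11_edge_start :: "nat \<Rightarrow> bool list set \<Rightarrow> nat" where
  "f11_edge_start n P \<equiv> suffix_start (n div 2) (\<lambda>a. occupies n P a (n div 2))"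

(* With m = n div 2 the three phases take the values [0, m), [m, 2 m) and [2 m, 4 m]. *)
definition potential :: "nat \<Rightarrow> bool list set \<Rightarrow> nat" where
  "potential n P =
    (if max_f22 n P < n div 2 then max_f22 n P
     else if \<not> occupies n P (n div 2) (n div 2) then n div 2 + max_f11_on_edge n P
     else 4 * (n div 2) - f22_edge_start n P - f11_edge_start n P)"

lemma potential_phases [consumes 2, case_names below edge corner]:
  assumes "finite P" "P \<noteq> {}"
  obtains (below) "max_f22 n P < n div 2"
    | (edge) b where "occupies n P (n div 2) b" "\<not> occupies n P (n div 2) (n div 2)"
    | (corner) "occupies n P (n div 2) (n div 2)"
  using max_f22_attained[OF assms] max_f22_le[OF assms] by (metis le_neq_implies_less occupies_def)

lemma potential_below_edge: "max_f22 n P < n div 2 \<Longrightarrow> potential n P = max_f22 n P"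
  by (simp add: potential_def)

lemma potential_on_edge:
  "finite P \<Longrightarrow> occupies n P (n div 2) b \<Longrightarrow> \<not> occupies n P (n div 2) (n div 2) \<Longrightarrow>
    potential n P = n div 2 + max_f11_on_edge n P"
  by (simp add: potential_def max_f22_eq_if_occupies)

lemma potential_corner:
  "finite P \<Longrightarrow> occupies n P (n div 2) (n div 2) \<Longrightarrow>
    potential n P = 4 * (n div 2) - f22_edge_start n P - f11_edge_start n P"
  by (simp add: potential_def max_f22_eq_if_occupies)

lemma max_f11_on_edge_less:
  assumes "even n" "finite P" "occupies n P (n div 2) b" "\<not> occupies n P (n div 2) (n div 2)"
  shows "max_f11_on_edge n P < n div 2"
proof -
  obtain x where "x \<in> P" "f22 n x = n div 2" "f11 n x = max_f11_on_edge n P"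
    using occupies_max_f11_on_edge[OF assms(2,3)] by (auto simp: occupies_def)
  then show ?thesis
    using assms(4) f11_le[OF assms(1), of x] by (auto simp: occupies_def le_less)
qed

lemma edge_starts_le:
  "occupies n P (n div 2) (n div 2) \<Longrightarrow> f22_edge_start n P \<le> n div 2 \<and> f11_edge_start n P \<le> n div 2"
  by (simp add: suffix_start_le)

lemma potential_corner_ge:
  "finite P \<Longrightarrow> occupies n P (n div 2) (n div 2) \<Longrightarrow> 2 * (n div 2) \<le> potential n P"
  using edge_starts_le[of n P] by (simp add: potential_corner) arith

lemma min_max_f22_le_potential:
  assumes "valid_population n P" "even n"
  shows "min (max_f22 n P) (n div 2) \<le> potential n P"
proof (cases "max_f22 n P < n div 2")
  case True
  then show ?thesis by (simp add: potential_below_edge)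
next
  case False
  have fin: "finite P" "P \<noteq> {}" using assms(1) by (auto simp: valid_population_def)
  then obtain x where "x \<in> P" "f22 n x = n div 2"
    using max_f22_attained max_f22_le False by (metis le_antisym not_less)
  then have occ: "occupies n P (n div 2) (f11 n x)" by (auto simp: occupies_def)
  show ?thesis
  proof (cases "occupies n P (n div 2) (n div 2)")
    case True
    then show ?thesis using potential_corner_ge[OF fin(1) True] by linarith
  next
    case False
    then show ?thesis by (simp add: potential_on_edge[OF fin(1) occ])
  qed
qed

lemma potential_less:
  assumes "valid_population n P" "even n" "\<not> covers_front n P"
  shows "potential n P < 4 * (n div 2)"
proof -
  have fin: "finite P" "P \<noteq> {}" using assms(1) by (auto simp: valid_population_def)
  show ?thesis
    using fin
  proof (cases rule: potential_phases[where n = n])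
    case below
    then show ?thesis by (simp add: potential_below_edge)
  next
    case edge
    then show ?thesis
      using max_f11_on_edge_less[OF assms(2) fin(1) edge] by (simp add: potential_on_edge[OF fin(1) edge])
  next
    case corner
    have "f22_edge_start n P \<noteq> 0 \<or> f11_edge_start n P \<noteq> 0"
      using assms(3) covers_front_if_edges_occupied[OF assms(2)] suffix_start_holds
      by (metis le0)
    then show ?thesis
      using edge_starts_le[OF corner] by (simp add: potential_corner[OF fin(1) corner]) arith
  qed
qed

lemma potential_update_mono:
  assumes valid: "valid_population n P" and even: "even n" and x': "x' \<in> bitstrings n"
  shows "potential n P \<le> potential n (semo_update n P x')"
proof -
  define P' where "P' = semo_update n P x'"
  have fin: "finite P" "P \<noteq> {}" using valid by (auto simp: valid_population_def)
  have valid': "valid_population n P'" unfolding P'_def using valid x' by (rule valid_population_update)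
  then have fin': "finite P'" by (simp add: valid_population_def)
  have persist: "occupies n P' a b" if "occupies n P a b" "a = n div 2 \<or> b = n div 2" for a b
    unfolding P'_def using occupies_update_front[OF even that] .
  have "potential n P \<le> potential n P'"
    using fin
  proof (cases rule: potential_phases[where n = n])
    case below
    then show ?thesis
      using max_f22_update_mono[OF even valid x'] min_max_f22_le_potential[OF valid' even]
      by (simp add: potential_below_edge P'_def)
  next
    case edge
    have occ: "occupies n P (n div 2) (max_f11_on_edge n P)"
      using occupies_max_f11_on_edge[OF fin(1) edge(1)] .
    then have occ': "occupies n P' (n div 2) (max_f11_on_edge n P)" by (simp add: persist)
    have less: "max_f11_on_edge n P < n div 2"
      using max_f11_on_edge_less[OF even fin(1) edge] .
    show ?thesis
    proof (cases "occupies n P' (n div 2) (n div 2)")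
      case True
      then show ?thesis
        using potential_corner_ge[OF fin' True] less by (simp add: potential_on_edge[OF fin(1) edge])
    next
      case False
      obtain z where "z \<in> P'" "f22 n z = n div 2" "f11 n z = max_f11_on_edge n P"
        using occ' by (auto simp: occupies_def)
      then have "max_f11_on_edge n P \<le> max_f11_on_edge n P'"
        using f11_le_max_f11_on_edge[OF fin'] by metis
      then show ?thesis
        by (simp add: potential_on_edge[OF fin(1) edge] potential_on_edge[OF fin' occ' False])
    qed
  next
    case corner
    have "f22_edge_start n P' \<le> f22_edge_start n P" "f11_edge_start n P' \<le> f11_edge_start n P"
      by (auto intro!: suffix_start_mono persist)
    then show ?thesis
      using potential_corner[OF fin(1) corner] potential_corner[OF fin' persist[OF corner]]
      by (simp add: diff_le_mono2)
  qed
  then show ?thesis by (simp add: P'_def)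
qed

definition improving_moves :: "nat \<Rightarrow> bool list set \<Rightarrow> (bool list \<times> nat) set" where
  "improving_moves n P =
    {(x, i) \<in> P \<times> {..<n}. potential n P < potential n (semo_update n P (flip x i))}"

lemma finite_improving_moves: "finite P \<Longrightarrow> finite (improving_moves n P)"
  unfolding improving_moves_def by (rule finite_subset[of _ "P \<times> {..<n}"]) auto

lemma card_improving_moves_below_edge:
  assumes valid: "valid_population n P" and even: "even n" and below: "max_f22 n P < n div 2"
  shows "n div 2 - max_f22 n P \<le> card (improving_moves n P)"
proof -
  have fin: "finite P" "P \<noteq> {}" using valid by (auto simp: valid_population_def)
  obtain x where x: "x \<in> P" "f22 n x = max_f22 n P" using max_f22_attained[OF fin] by blast
  have len: "length x = n" using valid x(1) by (auto simp: valid_population_def bitstrings_def)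
  define J where "J = {i \<in> {..<n div 2}. \<not> x ! i}"
  have "{x} \<times> J \<subseteq> improving_moves n P"
  proof clarify
    fix i assume "i \<in> J"
    then have i: "i < n div 2" "\<not> x ! i" "i < n" by (auto simp: J_def)
    define P' where "P' = semo_update n P (flip x i)"
    have valid': "valid_population n P'"
      unfolding P'_def using valid x(1) by (rule valid_population_update_flip)
    have f22': "f22 n (flip x i) = max_f22 n P + 1" using i x len by (simp add: f22_flip)
    have "flip x i \<in> P'"
      unfolding P'_def
    proof (rule semo_update_accepts)
      fix z assume "z \<in> P"
      then have "f22 n z < f22 n (flip x i)" using f22_le_max_f22[OF fin(1), of z n] f22' by simp
      then show "\<not> dominates n z (flip x i) \<and> AOAZ n z \<noteq> AOAZ n (flip x i)"
        using dominates_imp_less[OF even] AOAZ_eq_iff[OF even] by fastforce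
    qed
    then have "max_f22 n P < max_f22 n P'"
      using f22_le_max_f22[of P' "flip x i" n] valid' f22' by (simp add: valid_population_def)
    then have "max_f22 n P < potential n P'"
      using min_max_f22_le_potential[OF valid' even] below by linarith
    then show "(x, i) \<in> improving_moves n P"
      using x(1) i by (simp add: improving_moves_def potential_below_edge[OF below] P'_def)
  qed
  then have "card ({x} \<times> J) \<le> card (improving_moves n P)"
    by (intro card_mono finite_improving_moves fin)
  moreover have "card ({x} \<times> J) = n div 2 - max_f22 n P"
    using card_zeros_fst[of n x] x(2) by (simp add: J_def card_cartesian_product)
  ultimately show ?thesis by simp
qed

lemma card_improving_moves_on_edge:
  assumes valid: "valid_population n P" and even: "even n"
    and edge: "occupies n P (n div 2) b" "\<not> occupies n P (n div 2) (n div 2)"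
  shows "n div 2 - max_f11_on_edge n P \<le> card (improving_moves n P)"
proof -
  have fin: "finite P" using valid by (simp add: valid_population_def)
  obtain x where x: "x \<in> P" "f22 n x = n div 2" "f11 n x = max_f11_on_edge n P"
    using occupies_max_f11_on_edge[OF fin edge(1)] by (auto simp: occupies_def)
  have len: "length x = n" using valid x(1) by (auto simp: valid_population_def bitstrings_def)
  have less: "max_f11_on_edge n P < n div 2" using max_f11_on_edge_less[OF even fin edge] .
  define J where "J = {i \<in> {n div 2..<n}. \<not> x ! i}"
  have "{x} \<times> J \<subseteq> improving_moves n P"
  proof clarify
    fix i assume "i \<in> J"
    then have i: "n div 2 \<le> i" "i < n" "\<not> x ! i" by (auto simp: J_def)
    define x' where "x' = flip x i"
    define P' where "P' = semo_update n P x'"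
    have valid': "valid_population n P'"
      unfolding P'_def x'_def using valid x(1) by (rule valid_population_update_flip)
    then have fin': "finite P'" by (simp add: valid_population_def)
    have x': "f22 n x' = n div 2" "f11 n x' = max_f11_on_edge n P + 1"
      using i x len by (simp_all add: x'_def f22_flip f11_flip)
    have "\<not> occupies n P (f22 n x') (f11 n x')"
      using x' f11_le_max_f11_on_edge[OF fin] by (fastforce simp: occupies_def)
    then have occ': "occupies n P' (n div 2) (max_f11_on_edge n P + 1)"
      using occupies_update_new_front[OF even, of x' P] x' by (simp add: P'_def)
    have "potential n P < potential n P'"
    proof (cases "occupies n P' (n div 2) (n div 2)")
      case True
      then show ?thesis
        using potential_corner_ge[OF fin' True] less by (simp add: potential_on_edge[OF fin edge])
    next
      case False
      obtain z where "z \<in> P'" "f22 n z = n div 2" "f11 n z = max_f11_on_edge n P + 1"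
        using occ' by (auto simp: occupies_def)
      then have "max_f11_on_edge n P < max_f11_on_edge n P'"
        using f11_le_max_f11_on_edge[OF fin'] by (metis Suc_eq_plus1 Suc_le_lessD)
      then show ?thesis
        by (simp add: potential_on_edge[OF fin edge] potential_on_edge[OF fin' occ' False])
    qed
    then show "(x, i) \<in> improving_moves n P"
      using x(1) i by (simp add: improving_moves_def P'_def x'_def)
  qed
  then have "card ({x} \<times> J) \<le> card (improving_moves n P)"
    by (intro card_mono finite_improving_moves fin)
  moreover have "card ({x} \<times> J) = n div 2 - max_f11_on_edge n P"
    using card_zeros_snd[OF even, of x] x(3) by (simp add: J_def card_cartesian_product)
  ultimately show ?thesis by simp
qed

lemma potential_update_corner_less:
  assumes valid: "valid_population n P" and even: "even n" and x': "x' \<in> bitstrings n"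
    and corner: "occupies n P (n div 2) (n div 2)"
    and step: "(f22 n x' = n div 2 \<and> f11 n x' + 1 = f22_edge_start n P) \<or>
               (f11 n x' = n div 2 \<and> f22 n x' + 1 = f11_edge_start n P)"
  shows "potential n P < potential n (semo_update n P x')"
proof -
  define P' where "P' = semo_update n P x'"
  have fin: "finite P" using valid by (simp add: valid_population_def)
  have fin': "finite P'"
    using valid_population_update[OF valid x'] by (simp add: P'_def valid_population_def)
  have persist: "occupies n P' a b" if "occupies n P a b" "a = n div 2 \<or> b = n div 2" for a b
    unfolding P'_def using occupies_update_front[OF even that] .
  have new: "occupies n P' (f22 n x') (f11 n x')" if "\<not> occupies n P (f22 n x') (f11 n x')"
    unfolding P'_def using occupies_update_new_front[OF even _ that] step by blast
  have le1: "f22_edge_start n P' \<le> f22_edge_start n P"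
    and le2: "f11_edge_start n P' \<le> f11_edge_start n P"
    by (auto intro!: suffix_start_mono persist)
  have "f22_edge_start n P' < f22_edge_start n P \<or> f11_edge_start n P' < f11_edge_start n P"
    using step
  proof (elim disjE conjE)
    assume on_edge: "f22 n x' = n div 2" "f11 n x' + 1 = f22_edge_start n P"
    then have pos: "0 < f22_edge_start n P" and pred: "f22_edge_start n P - 1 = f11 n x'" by auto
    have "occupies n P' (n div 2) (f22_edge_start n P - 1)"
      using new not_suffix_start_pred[OF pos] on_edge(1) unfolding pred by simp
    then show ?thesis
      by (intro disjI1 suffix_start_less pos) (auto intro: persist)
  next
    assume on_edge: "f11 n x' = n div 2" "f22 n x' + 1 = f11_edge_start n P"
    then have pos: "0 < f11_edge_start n P" and pred: "f11_edge_start n P - 1 = f22 n x'" by auto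
    have "occupies n P' (f11_edge_start n P - 1) (n div 2)"
      using new not_suffix_start_pred[OF pos] on_edge(1) unfolding pred by simp
    then show ?thesis
      by (intro disjI2 suffix_start_less pos) (auto intro: persist)
  qed
  then show ?thesis
    using edge_starts_le[OF corner] le1 le2 potential_corner[OF fin corner]
      potential_corner[OF fin' persist[OF corner]]
    by (simp add: P'_def) arith
qed

lemma card_improving_moves_corner:
  assumes valid: "valid_population n P" and even: "even n"
    and corner: "occupies n P (n div 2) (n div 2)"
  shows "f22_edge_start n P + f11_edge_start n P \<le> card (improving_moves n P)"
proof -
  have fin: "finite P" using valid by (simp add: valid_population_def)
  have bits: "P \<subseteq> bitstrings n" using valid by (simp add: valid_population_def)
  obtain x1 where x1: "x1 \<in> P" "f22 n x1 = n div 2" "f11 n x1 = f22_edge_start n P"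
    using suffix_start_holds edge_starts_le[OF corner] by (fastforce simp: occupies_def)
  obtain x2 where x2: "x2 \<in> P" "f22 n x2 = f11_edge_start n P" "f11 n x2 = n div 2"
    using suffix_start_holds edge_starts_le[OF corner] by (fastforce simp: occupies_def)
  define J1 where "J1 = {i \<in> {n div 2..<n}. x1 ! i}"
  define J2 where "J2 = {i \<in> {..<n div 2}. x2 ! i}"
  have len: "length x1 = n" "length x2 = n" using bits x1(1) x2(1) by (auto simp: bitstrings_def)
  have card_J: "card J1 = f22_edge_start n P" "card J2 = f11_edge_start n P"
    using x1(3) x2(2) by (simp_all add: J1_def J2_def f11_eq_card f22_eq_card)
  have "{x1} \<times> J1 \<subseteq> improving_moves n P"
  proof clarify
    fix i assume "i \<in> J1"
    then have i: "n div 2 \<le> i" "i < n" "x1 ! i" and "0 < card J1"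
      by (auto simp: J1_def card_gt_0_iff)
    then have "f22 n (flip x1 i) = n div 2" "f11 n (flip x1 i) + 1 = f22_edge_start n P"
      using x1 len card_J by (simp_all add: f22_flip f11_flip)
    then show "(x1, i) \<in> improving_moves n P"
      using potential_update_corner_less[OF valid even _ corner] x1(1) i bits
      by (auto simp: improving_moves_def flip_in_bitstrings)
  qed
  moreover have "{x2} \<times> J2 \<subseteq> improving_moves n P"
  proof clarify
    fix i assume "i \<in> J2"
    then have i: "i < n div 2" "i < n" "x2 ! i" and "0 < card J2"
      by (auto simp: J2_def card_gt_0_iff)
    then have "f11 n (flip x2 i) = n div 2" "f22 n (flip x2 i) + 1 = f11_edge_start n P"
      using x2 len card_J by (simp_all add: f22_flip f11_flip)
    then show "(x2, i) \<in> improving_moves n P"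
      using potential_update_corner_less[OF valid even _ corner] x2(1) i bits
      by (auto simp: improving_moves_def flip_in_bitstrings)
  qed
  ultimately have "card ({x1} \<times> J1 \<union> {x2} \<times> J2) \<le> card (improving_moves n P)"
    by (intro card_mono finite_improving_moves fin) auto
  moreover have "card ({x1} \<times> J1 \<union> {x2} \<times> J2) = card J1 + card J2"
    by (subst card_Un_disjoint) (auto simp: J1_def J2_def card_cartesian_product)
  ultimately show ?thesis using card_J by simp
qed

definition min_improving_moves :: "nat \<Rightarrow> nat \<Rightarrow> nat" where
  "min_improving_moves n k =
    (if k < n div 2 then n div 2 - k
     else if k < 2 * (n div 2) then 2 * (n div 2) - k
     else 4 * (n div 2) - k)"

lemma min_improving_moves_pos: "k < 4 * (n div 2) \<Longrightarrow> 0 < min_improving_moves n k"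
  by (simp add: min_improving_moves_def)

lemma min_improving_moves_le_card_improving_moves:
  assumes valid: "valid_population n P" and even: "even n"
  shows "min_improving_moves n (potential n P) \<le> card (improving_moves n P)"
proof -
  have fin: "finite P" "P \<noteq> {}" using valid by (auto simp: valid_population_def)
  show ?thesis
    using fin
  proof (cases rule: potential_phases[where n = n])
    case below
    then show ?thesis
      using card_improving_moves_below_edge[OF valid even below]
      by (simp add: potential_below_edge min_improving_moves_def)
  next
    case edge
    then show ?thesis
      using card_improving_moves_on_edge[OF valid even edge] max_f11_on_edge_less[OF even fin(1) edge]
      by (simp add: potential_on_edge[OF fin(1) edge] min_improving_moves_def)
  next
    case corner
    have "min_improving_moves n (potential n P) = f22_edge_start n P + f11_edge_start n P"
      using edge_starts_le[OF corner] potential_corner_ge[OF fin(1) corner]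
      by (simp add: potential_corner[OF fin(1) corner] min_improving_moves_def)
    then show ?thesis
      using card_improving_moves_corner[OF valid even corner] by simp
  qed
qed

section \<open>Expected runtime\<close>

lemma prob_semo_step_improves:
  assumes valid: "valid_population n P" and even: "even n" and "0 < n" and nc: "\<not> covers_front n P"
  shows "real (min_improving_moves n (potential n P)) / real (n * (n + 1))
    \<le> measure_pmf.prob (semo_step n P) {Q. potential n P < potential n Q}"
proof -
  have fin: "finite P" "P \<noteq> {}" using valid by (auto simp: valid_population_def)
  have "real (min_improving_moves n (potential n P)) / real (n * (n + 1))
      \<le> real (card (improving_moves n P)) / real (n * (n + 1))"
    using min_improving_moves_le_card_improving_moves[OF valid even] by (simp add: divide_right_mono)
  also have "\<dots> \<le> real (card (improving_moves n P)) / real (card P * n)"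
  proof (rule frac_le)
    have "card P * n \<le> n * (n + 1)"
      using mult_le_mono1[OF card_valid_population[OF valid even], of n] by (simp add: mult.commute)
    then show "real (card P * n) \<le> real (n * (n + 1))"
      by (simp only: of_nat_le_iff)
    show "0 < real (card P * n)"
      using fin \<open>0 < n\<close> by (simp add: card_gt_0_iff)
  qed simp_all
  also have "\<dots> = measure_pmf.prob (semo_step n P) {Q. potential n P < potential n Q}"
    using nc prob_uniform_pair_choice[OF fin \<open>0 < n\<close>, of "\<lambda>x i. semo_update n P (flip x i)"]
    by (simp add: semo_step_def improving_moves_def)
  finally show ?thesis .
qed

lemma sum_inverse_interval_eq_harm:
  "(\<Sum>k\<in>{a..<a + l}. 1 / real (a + l - k)) = (harm l :: real)"
proof -
  have "(\<Sum>k\<in>{a..<a + l}. 1 / real (a + l - k)) = (\<Sum>j<l. 1 / real (a + l - (a + j)))"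
    using sum.atLeastLessThan_shift_bounds[of "\<lambda>k. 1 / real (a + l - k)" 0 a l]
    by (simp only: add_0 comp_def atLeast0LessThan add.commute[of l a])
  also have "\<dots> = (\<Sum>j<l. 1 / real (l - j))"
    by simp
  also have "\<dots> = (\<Sum>j<l. inverse (real (Suc (l - Suc j))))"
    by (intro sum.cong) (auto simp: Suc_diff_Suc divide_inverse)
  also have "\<dots> = harm l"
    unfolding harm_altdef by (rule sum.nat_diff_reindex)
  finally show ?thesis .
qed

lemma sum_inverse_min_improving_moves:
  "(\<Sum>k<4 * (n div 2). 1 / real (min_improving_moves n k))
    = 2 * harm (n div 2) + harm (2 * (n div 2))"
proof -
  let ?m = "n div 2"
  let ?f = "\<lambda>k. 1 / real (min_improving_moves n k)"
  have "(\<Sum>k\<in>{0..<?m}. ?f k) = (\<Sum>k\<in>{0..<0 + ?m}. 1 / real (0 + ?m - k))"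
    by (intro sum.cong) (auto simp: min_improving_moves_def)
  moreover have "(\<Sum>k\<in>{?m..<2 * ?m}. ?f k) = (\<Sum>k\<in>{?m..<?m + ?m}. 1 / real (?m + ?m - k))"
    by (intro sum.cong) (auto simp: min_improving_moves_def)
  moreover have "(\<Sum>k\<in>{2 * ?m..<4 * ?m}. ?f k)
      = (\<Sum>k\<in>{2 * ?m..<2 * ?m + 2 * ?m}. 1 / real (2 * ?m + 2 * ?m - k))"
    by (intro sum.cong) (auto simp: min_improving_moves_def)
  moreover have "(\<Sum>k<4 * ?m. ?f k)
      = (\<Sum>k\<in>{0..<?m}. ?f k) + (\<Sum>k\<in>{?m..<2 * ?m}. ?f k) + (\<Sum>k\<in>{2 * ?m..<4 * ?m}. ?f k)"
    by (simp add: sum.atLeastLessThan_concat atLeast0LessThan[symmetric])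
  ultimately show ?thesis by (simp only: sum_inverse_interval_eq_harm)
qed

lemma set_pmf_semo_pop_0: "set_pmf (semo_pop n 0) = (\<lambda>x. {x}) ` bitstrings n"
  using finite_bitstrings bitstrings_nonempty by simp

lemma set_pmf_semo_step:
  assumes "finite P" "P \<noteq> {}" "0 < n"
  shows "set_pmf (semo_step n P) =
    (if covers_front n P then {P} else (\<lambda>(x, i). semo_update n P (flip x i)) ` (P \<times> {..<n}))"
  using assms by (auto simp: semo_step_def lessThan_empty_iff)

lemma semo_step_preserves:
  assumes valid: "valid_population n P" and "P' \<in> set_pmf (semo_step n P)" "even n" "0 < n"
  shows "valid_population n P' \<and> potential n P \<le> potential n P'"
proof -
  have "finite P" "P \<noteq> {}" "P \<subseteq> bitstrings n" using valid by (auto simp: valid_population_def)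
  then show ?thesis
    using assms set_pmf_semo_step[of P n] valid_population_update_flip[OF valid]
      potential_update_mono[OF valid \<open>even n\<close>]
    by (auto split: if_splits simp: flip_in_bitstrings subset_iff)
qed

lemma semo_expected_runtime_le_harm:
  assumes "even n" "0 < n"
  shows "semo_expected_runtime n \<le> ennreal (real (n * (n + 1)) * (2 * harm (n div 2) + harm n))"
proof -
  let ?p = "\<lambda>k. real (min_improving_moves n k) / real (n * (n + 1))"
  have "semo_expected_runtime n \<le> ennreal (\<Sum>k<4 * (n div 2). 1 / ?p k)"
    unfolding semo_expected_runtime_def
  proof (rule fitness_level_method[where I = "valid_population n"])
    show "semo_pop n (Suc t) = semo_pop n t \<bind> semo_step n" for t by simp
    show "valid_population n P" if "P \<in> set_pmf (semo_pop n 0)" for P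
      using that unfolding set_pmf_semo_pop_0 by (auto intro: valid_population_singleton)
    show "valid_population n P'" "potential n P \<le> potential n P'"
      if "valid_population n P" "P' \<in> set_pmf (semo_step n P)" for P P'
      using semo_step_preserves[OF that assms] by auto
    show "potential n P < 4 * (n div 2)" if "valid_population n P" "\<not> covers_front n P" for P
      using potential_less[OF that(1) assms(1) that(2)] .
    show "0 < ?p k" if "k < 4 * (n div 2)" for k
    proof (intro divide_pos_pos)
      show "0 < real (n * (n + 1))" using assms(2) by (simp only: of_nat_0_less_iff) simp
    qed (use min_improving_moves_pos[OF that] in simp)
    show "?p (potential n P) \<le> measure_pmf.prob (semo_step n P) {P'. potential n P < potential n P'}"
      if "valid_population n P" "\<not> covers_front n P" for P
      using prob_semo_step_improves[OF that(1) assms that(2)] by simp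
  qed
  also have "(\<Sum>k<4 * (n div 2). 1 / ?p k)
      = real (n * (n + 1)) * (\<Sum>k<4 * (n div 2). 1 / real (min_improving_moves n k))"
    by (simp add: sum_distrib_left)
  also have "\<dots> = real (n * (n + 1)) * (2 * harm (n div 2) + harm n)"
    using assms(1) by (simp add: sum_inverse_min_improving_moves)
  finally show ?thesis .
qed

lemma harm_le_one_plus_ln: "0 < m \<Longrightarrow> (harm m :: real) \<le> 1 + ln (real m)"
  using euler_mascheroni_sequence_decreasing[of 1 m] by (simp add: harm_def)

lemma harmonic_runtime_bound_le:
  assumes "3 \<le> n"
  shows "real (n * (n + 1)) * (2 * harm (n div 2) + harm n) \<le> 12 * (real n)\<^sup>2 * ln (real n)"
proof -
  have "exp 1 \<le> real n" using exp_le assms by linarith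
  then have ln: "1 \<le> ln (real n)" using assms by (simp add: ln_ge_iff)
  have "harm (n div 2) \<le> (harm n :: real)" by (rule harm_mono) simp
  moreover have "harm n \<le> 2 * ln (real n)" using harm_le_one_plus_ln[of n] assms ln by simp
  ultimately have "2 * harm (n div 2) + harm n \<le> 6 * ln (real n)" by simp
  moreover have "real (n * (n + 1)) \<le> 2 * (real n)\<^sup>2" using assms by (simp add: power2_eq_square)
  ultimately have "real (n * (n + 1)) * (2 * harm (n div 2) + harm n)
      \<le> 2 * (real n)\<^sup>2 * (6 * ln (real n))"
    by (intro mult_mono) (simp_all add: harm_nonneg)
  then show ?thesis by simp
qed

theorem theorem4:
  shows "\<exists>c::real. \<exists>N::nat. \<forall>n\<ge>N. even n \<longrightarrow>
           semo_expected_runtime n \<le> ennreal (c * (real n)^2 * ln (real n))"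
proof (intro exI allI impI)
  fix n :: nat assume "3 \<le> n" "even n"
  then have "semo_expected_runtime n \<le> ennreal (real (n * (n + 1)) * (2 * harm (n div 2) + harm n))"
    by (intro semo_expected_runtime_le_harm) simp_all
  also have "\<dots> \<le> ennreal (12 * (real n)^2 * ln (real n))"
    using harmonic_runtime_bound_le[OF \<open>3 \<le> n\<close>] by (rule ennreal_leI)
  finally show "semo_expected_runtime n \<le> ennreal (12 * (real n)^2 * ln (real n))" .
qed

end
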